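(* Assume $d>0$ (in addition to the standing assumptions, including condition (L)). For every $q>0$, the Riccati differential equation $$(\epsilon'_q)\qquad y'-y^2=-q\,r^2$$ on $(0,\xi)$ has a unique nonnegative solution $w_q$ defined on the whole interval $(0,\xi)$ and satisfying $\lim_{s\to\xi-}w_q(s)=0$. Moreover $w_q>0$ on $(0,\xi)$, and there exist $0<s_1<s_2<\xi$ such that $w_q(s)<\sqrt q\, r(s)$ for all $s\in(0,s_1)\cup(s_2,\xi)$. Consequently $\int_0^\xi w_q(s)\,ds<\infty$, and $w_q$ is decreasing on some neighborhood of $0+$ and on some neighborhood of $\xi-$.
   Context: Discrete setting. Fix real numbers $\rho>0$, $d\ge 0$, $c>0$ and nonnegative reals $(\pi_k)_{k\ge1}$ with $\sum_{k\ge1}\pi_k=\rho$. Write $\bar\pi_k=\sum_{i\ge k}\pi_i$. Condition (L): $\sum_{i\ge1}\pi_i\log i<\infty$ (equivalently $\sum_k\bar\pi_k/k<\infty$). Set $\psi(s)=d-(\rho+d)s+\sum_{i\ge1}\pi_i s^{i+1}$ for $s\in[0,1]$, and under (L) define for $s\in(0,1]$ $$m(s)=\int_s^1\frac{\psi(v)}{c\,v(1-v)}\,dv,$$ so that $e^{m(s)}=\beta s^{-d/c}\exp\big(\sum_{k\ge1}\bar\pi_k s^k/(ck)\big)$ with $\beta=\exp(-\sum_{k\ge1}\bar\pi_k/(ck))$. Define $\theta:(0,1]\to[0,\xi)$ by $\theta(s)=\int_s^1 e^{m(v)}dv$, where $\xi=\int_0^1e^{m(v)}dv\in(0,\infty]$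 (one has $\xi=\infty$ iff $d\ge c$); $\theta$ is a decreasing bijection, with inverse $\varphi:[0,\xi)\to(0,1]$, and $\varphi'(s)=-\exp(-m(\varphi(s)))$. Define $$r(s)=\frac{|\varphi'(s)|}{\sqrt{c\,\varphi(s)(1-\varphi(s))}},\qquad s\in(0,\xi).$$ *)

theory Defs
  imports "HOL-Analysis.Analysis"
begin

text \<open>Parameters: p = (pi_k) (only indices k >= 1 are used), rho, d, c.\<close>

definition psi :: "(nat \<Rightarrow> real) \<Rightarrow> real \<Rightarrow> real \<Rightarrow> real \<Rightarrow> real" where
  "psi p \<rho> d s = d - (\<rho> + d) * s + (\<Sum>i. p (Suc i) * s ^ (Suc i + 1))"

definition mfun :: "(nat \<Rightarrow> real) \<Rightarrow> real \<Rightarrow> real \<Rightarrow> real \<Rightarrow> real \<Rightarrow> real" where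
  "mfun p \<rho> d c s = integral {s..1} (\<lambda>v. psi p \<rho> d v / (c * v * (1 - v)))"

definition theta :: "(nat \<Rightarrow> real) \<Rightarrow> real \<Rightarrow> real \<Rightarrow> real \<Rightarrow> real \<Rightarrow> real" where
  "theta p \<rho> d c s = integral {s..1} (\<lambda>v. exp (mfun p \<rho> d c v))"

text \<open>xi = int_0^1 e^m, possibly infinite; as theta is decreasing, it is the supremum.\<close>
definition xi :: "(nat \<Rightarrow> real) \<Rightarrow> real \<Rightarrow> real \<Rightarrow> real \<Rightarrow> ereal" where
  "xi p \<rho> d c = (SUP s\<in>{0<..1}. ereal (theta p \<rho> d c s))"

definition Ixi :: "(nat \<Rightarrow> real) \<Rightarrow> real \<Rightarrow> real \<Rightarrow> real \<Rightarrow> real set" where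
  "Ixi p \<rho> d c = {s. 0 < s \<and> ereal s < xi p \<rho> d c}"

definition at_xi :: "(nat \<Rightarrow> real) \<Rightarrow> real \<Rightarrow> real \<Rightarrow> real \<Rightarrow> real filter" where
  "at_xi p \<rho> d c = (if xi p \<rho> d c = \<infinity> then at_top else at_left (real_of_ereal (xi p \<rho> d c)))"

definition phi :: "(nat \<Rightarrow> real) \<Rightarrow> real \<Rightarrow> real \<Rightarrow> real \<Rightarrow> real \<Rightarrow> real" where
  "phi p \<rho> d c t = (THE s. s \<in> {0<..1} \<and> theta p \<rho> d c s = t)"

definition rfun :: "(nat \<Rightarrow> real) \<Rightarrow> real \<Rightarrow> real \<Rightarrow> real \<Rightarrow> real \<Rightarrow> real" where
  "rfun p \<rho> d c s = \<bar>deriv (phi p \<rho> d c) s\<bar> /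
     sqrt (c * phi p \<rho> d c s * (1 - phi p \<rho> d c s))"

definition riccati_sol :: "(nat \<Rightarrow> real) \<Rightarrow> real \<Rightarrow> real \<Rightarrow> real \<Rightarrow> real \<Rightarrow> (real \<Rightarrow> real) \<Rightarrow> bool" where
  "riccati_sol p \<rho> d c q w \<longleftrightarrow>
     (\<forall>s\<in>Ixi p \<rho> d c.
        (w has_real_derivative (w s ^ 2 - q * rfun p \<rho> d c s ^ 2)) (at s))"

end

theory Submission
  imports Defs "HOL-Real_Asymp.Real_Asymp"
begin

text \<open>The substitution \<open>w = - y' / y\<close> turns the Riccati equation into the linear equation
  \<open>y'' = q r\<^sup>2 y\<close>; writing \<open>y = U \<circ> \<phi>\<close> with \<open>v = \<phi> s \<in> (0, 1)\<close> (\<open>v \<rightarrow> 0\<close> as \<open>s \<rightarrow> \<xi>\<close>),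
  it becomes \<open>(\<kappa> U')' = pot U\<close> with \<open>\<kappa> = exp (- m)\<close> and \<open>pot v = q \<kappa> v / (c v (1 - v))\<close>.
  Because \<open>d > 0\<close> and (L) give \<open>\<kappa> v \<asymp> v powr (d / c)\<close>, \<open>pot\<close> is integrable at 0, and the solution
  with \<open>U 0 = 1\<close>, \<open>(\<kappa> U') 0 = 0\<close> is obtained by monotone Picard iteration, under an explicit
  exponential bound that stays finite up to \<open>v = 1\<close>. Then \<open>w = (\<kappa> U' / U) \<circ> \<phi>\<close> is positive and
  at most \<open>(\<integral>\<^sub>0\<^sup>v pot) \<circ> \<phi> = O (v powr (d / c) (1 + ln (1 / (1 - v))))\<close>: it tends to 0 at \<open>\<xi>\<close> and is
  \<open>o (r)\<close> at both ends, so there \<open>w < \<surd>q r\<close> and \<open>w' = w\<^sup>2 - q r\<^sup>2 < 0\<close>. Its primitive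
  \<open>- ln (U \<circ> \<phi>)\<close> is bounded, so \<open>w\<close> is integrable. For uniqueness, the squared difference of two
  nonnegative solutions is nondecreasing and tends to 0 at \<open>\<xi>\<close>.\<close>

lemma integrable_on_Icc_if_continuous_dominated:
  fixes f g :: "real \<Rightarrow> real"
  assumes "continuous_on {a<..b} f" "\<And>x. x \<in> {a<..b} \<Longrightarrow> \<bar>f x\<bar> \<le> g x"
    and "g integrable_on {a..b}"
  shows "f integrable_on {a..b}"
proof -
  have Ioc_iff: "k integrable_on {a<..b} \<longleftrightarrow> k integrable_on {a..b}" for k :: "real \<Rightarrow> real"
    by (rule integrable_spike_set_eq, rule negligible_subset[of "{a}"]) auto
  have "f \<in> borel_measurable (lebesgue_on {a<..b})"
    by (rule continuous_imp_measurable_on_sets_lebesgue[OF assms(1)]) auto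
  moreover have "g integrable_on {a<..b}"
    using assms(3) Ioc_iff by blast
  ultimately have "f integrable_on {a<..b}"
    by (rule measurable_bounded_by_integrable_imp_integrable_real) (use assms(2) in auto)
  then show ?thesis using Ioc_iff by blast
qed

lemma has_real_derivative_integral_upper:
  fixes f :: "real \<Rightarrow> real"
  assumes "f integrable_on {a..b}" "continuous_on {a<..<b} f" "a < v" "v < b"
  shows "((\<lambda>u. integral {a..u} f) has_real_derivative f v) (at v)"
proof -
  have "isCont f v"
    using assms(2-4) continuous_on_eq_continuous_at[of "{a<..<b}" f] by auto
  then have "continuous (at v within {a..b} - {}) f"
    by (simp add: continuous_at_imp_continuous_at_within)
  from integral_has_vector_derivative_continuous_at[OF assms(1) _ finite.emptyI this]
  have "((\<lambda>u. integral {a..u} f) has_vector_derivative f v) (at v within {a..b})"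
    using assms by auto
  moreover have "at v within {a..b} = at v"
    using assms by (intro at_within_interior) auto
  ultimately show ?thesis by (simp add: has_real_derivative_iff_has_vector_derivative)
qed

lemma nonneg_integrable_on_exhaustion:
  fixes f :: "'n::euclidean_space \<Rightarrow> real"
  assumes K: "\<And>n. K n \<subseteq> K (Suc n)" "\<And>n. K n \<subseteq> S" "\<And>x. x \<in> S \<Longrightarrow> \<exists>n. x \<in> K n"
    and f: "\<And>n. f integrable_on K n" "\<And>x. x \<in> S \<Longrightarrow> 0 \<le> f x" "\<And>n. integral (K n) f \<le> B"
  shows "f integrable_on S"
proof -
  define fK where "fK n x = (if x \<in> K n then f x else 0)" for n x
  have S_Int_K: "S \<inter> K n = K n" for n using K(2) by blast
  have "f integrable_on S \<and> (\<lambda>n. integral S (fK n)) \<longlonglongrightarrow> integral S f"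
  proof (rule monotone_convergence_increasing)
    show "fK n integrable_on S" for n
      unfolding fK_def integrable_restrict_Int Int_commute[of _ S] S_Int_K by (rule f(1))
    show "fK n x \<le> fK (Suc n) x" if "x \<in> S" for n x
      using K(1) f(2)[OF that] unfolding fK_def by auto
    show "(\<lambda>n. fK n x) \<longlonglongrightarrow> f x" if x: "x \<in> S" for x
    proof (rule tendsto_eventually)
      obtain N where "x \<in> K N" using K(3)[OF x] by blast
      then have "x \<in> K n" if "N \<le> n" for n
        using lift_Suc_mono_le[of K, OF K(1) that] by blast
      then show "eventually (\<lambda>n. fK n x = f x) sequentially"
        unfolding fK_def eventually_sequentially by auto
    qed
    have "0 \<le> integral (K n) f" for n
      using f(1,2) K(2) by (intro integral_nonneg) auto
    then have "\<bar>integral S (fK n)\<bar> \<le> B" for n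
      using f(3) unfolding fK_def integral_restrict_Int Int_commute[of _ S] S_Int_K by (simp add: abs_le_iff)
    then show "bounded (range (\<lambda>n. integral S (fK n)))"
      unfolding bounded_iff by auto
  qed
  then show ?thesis by blast
qed

lemma riccati_nonneg_solutions_unique:
  fixes w1 w2 f :: "real \<Rightarrow> real"
  assumes S: "is_interval S" "s \<in> S"
    and w1: "\<And>x. x \<in> S \<Longrightarrow> (w1 has_real_derivative w1 x ^ 2 - f x) (at x)" "\<And>x. x \<in> S \<Longrightarrow> 0 \<le> w1 x"
    and w2: "\<And>x. x \<in> S \<Longrightarrow> (w2 has_real_derivative w2 x ^ 2 - f x) (at x)" "\<And>x. x \<in> S \<Longrightarrow> 0 \<le> w2 x"
    and F: "F \<noteq> bot" "eventually (\<lambda>t. t \<in> S \<and> s \<le> t) F" "(w1 \<longlongrightarrow> 0) F" "(w2 \<longlongrightarrow> 0) F"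
  shows "w1 s = w2 s"
proof -
  define z where "z x = (w1 x - w2 x) ^ 2" for x
  have z_deriv: "(z has_real_derivative 2 * (w1 x - w2 x) ^ 2 * (w1 x + w2 x)) (at x)" if "x \<in> S" for x
  proof -
    have "(z has_real_derivative 2 * ((w1 x ^ 2 - f x) - (w2 x ^ 2 - f x)) * (w1 x - w2 x)) (at x)"
      unfolding z_def[abs_def] using w1(1)[OF that] w2(1)[OF that]
      by (auto intro!: derivative_eq_intros)
    then show ?thesis by (simp add: power2_eq_square algebra_simps)
  qed
  have z_mono: "z s \<le> z t" if "t \<in> S" "s \<le> t" for t
  proof (rule DERIV_nonneg_imp_nondecreasing[OF that(2)])
    fix x assume "s \<le> x" "x \<le> t"
    then have "x \<in> S" using mem_is_interval_1_I[OF S(1) S(2) that(1)] by blast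
    then show "\<exists>y. (z has_real_derivative y) (at x) \<and> 0 \<le> y"
      using z_deriv w1(2) w2(2) by (intro exI conjI) auto
  qed
  have "(z \<longlongrightarrow> (0 - 0) ^ 2) F" unfolding z_def by (intro tendsto_intros F(3,4))
  moreover have "eventually (\<lambda>t. z s \<le> z t) F" using F(2) z_mono by (auto elim!: eventually_mono)
  ultimately have "z s \<le> 0" using tendsto_le[OF F(1) _ tendsto_const] by simp
  then show ?thesis unfolding z_def by simp
qed

lemma has_integral_sum_powers:
  "((\<lambda>t. \<Sum>j\<le>i. t ^ j) has_integral harm (Suc i)) {0..1::real}"
proof -
  have "((\<lambda>t. t ^ j) has_integral 1 / real (Suc j)) {0..1::real}" for j
  proof -
    have "((\<lambda>t. t ^ Suc j / real (Suc j)) has_real_derivative x ^ j) (at x)" for x :: real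
      using DERIV_cdivide[OF DERIV_pow[of "Suc j" x], of "real (Suc j)"] by simp
    then have "((\<lambda>t. t ^ j) has_integral 1 ^ Suc j / real (Suc j) - 0 ^ Suc j / real (Suc j)) {0..1::real}"
      by (intro fundamental_theorem_of_calculus)
         (auto simp: has_real_derivative_iff_has_vector_derivative[symmetric] has_field_derivative_at_within)
    then show ?thesis by simp
  qed
  then have "((\<lambda>t. \<Sum>j\<le>i. t ^ j) has_integral (\<Sum>j\<le>i. 1 / real (Suc j))) {0..1::real}"
    by (intro has_integral_sum) auto
  moreover have "(\<Sum>j\<le>i. 1 / real (Suc j)) = harm (Suc i)"
    unfolding harm_altdef lessThan_Suc_atMost by (simp add: inverse_eq_divide)
  ultimately show ?thesis by simp
qed

lemma sum_powers_le:
  fixes t :: real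
  assumes "0 \<le> t" "t < 1"
  shows "(\<Sum>j\<le>i. t ^ j) \<le> 1 / (1 - t)"
  using assms by (simp add: sum_gp0 divide_right_mono)

lemma has_integral_inverse_one_minus:
  fixes v :: real
  assumes "0 \<le> v" "v < 1"
  shows "((\<lambda>t. 1 / (1 - t)) has_integral - ln (1 - v)) {0..v}"
proof -
  have "((\<lambda>t. - ln (1 - t)) has_real_derivative 1 / (1 - x)) (at x)" if "x \<le> v" for x
    using that assms by (auto intro!: derivative_eq_intros simp: field_simps)
  then have "((\<lambda>t. 1 / (1 - t)) has_integral - ln (1 - v) - - ln (1 - 0)) {0..v}"
    using assms by (intro fundamental_theorem_of_calculus)
      (auto simp: has_real_derivative_iff_has_vector_derivative[symmetric] has_field_derivative_at_within)
  then show ?thesis by simp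
qed

lemma tendsto_powr_times_ln_bound:
  fixes a K :: real
  assumes "0 < a"
  shows "((\<lambda>v. v powr a * (K * (1 / a - ln (1 - v)))) \<longlongrightarrow> 0) (at_right 0)"
  using assms by real_asymp

lemma tendsto_ln_bound_times_sqrt:
  fixes a c K :: real
  assumes "0 < a" "0 < c"
  shows "((\<lambda>v. K * (1 / a - ln (1 - v)) * sqrt (c * v * (1 - v))) \<longlongrightarrow> 0) (at_right 0)"
    and "((\<lambda>v. K * (1 / a - ln (1 - v)) * sqrt (c * v * (1 - v))) \<longlongrightarrow> 0) (at_left 1)"
  using assms by real_asymp+

locale riccati_coeff =
  fixes p :: "nat \<Rightarrow> real" and \<rho> d c :: real
  assumes d_pos: "d > 0" and c_pos: "c > 0"
    and p_nonneg: "\<And>k. k \<ge> 1 \<Longrightarrow> p k \<ge> 0"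
    and p_sum: "(\<lambda>k. p (Suc k)) sums \<rho>"
    and condL: "summable (\<lambda>i. p (Suc i) * ln (real (Suc i)))"
begin

lemma p_Suc_nonneg: "0 \<le> p (Suc i)"
  using p_nonneg by simp

text \<open>Exchanging the sums, \<open>tail_gf t = (\<Sum>k. \<pi>' (k + 1) * t ^ k)\<close> with the tails
  \<open>\<pi>' k = (\<Sum>i\<ge>k. \<pi> i)\<close>; at \<open>t = 1\<close> the series may diverge and 0 is a junk value.\<close>
definition tail_gf :: "real \<Rightarrow> real" where
  "tail_gf t = (if t < 1 then (\<Sum>i. p (Suc i) * (\<Sum>j\<le>i. t ^ j)) else 0)"

lemma summable_tail_gf:
  assumes "0 \<le> t" "t < 1"
  shows "summable (\<lambda>i. p (Suc i) * (\<Sum>j\<le>i. t ^ j))"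
proof (rule summable_comparison_test)
  show "summable (\<lambda>i. p (Suc i) * (1 / (1 - t)))"
    using p_sum by (intro summable_mult2) (auto simp: sums_iff)
  have "norm (p (Suc i) * (\<Sum>j\<le>i. t ^ j)) \<le> p (Suc i) * (1 / (1 - t))" for i
  proof -
    have "0 \<le> (\<Sum>j\<le>i. t ^ j)" using assms by (intro sum_nonneg) auto
    then show ?thesis
      using mult_left_mono[OF sum_powers_le[OF assms] p_Suc_nonneg[of i]]
      by (simp add: abs_mult abs_of_nonneg[OF p_Suc_nonneg])
  qed
  then show "\<exists>N. \<forall>i\<ge>N. norm (p (Suc i) * (\<Sum>j\<le>i. t ^ j)) \<le> p (Suc i) * (1 / (1 - t))"
    by blast
qed

lemma tail_gf_nonneg: "0 \<le> t \<Longrightarrow> 0 \<le> tail_gf t"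
  unfolding tail_gf_def using summable_tail_gf p_Suc_nonneg
  by (auto intro!: suminf_nonneg sum_nonneg mult_nonneg_nonneg)

lemma psi_eq_tail_gf:
  assumes "0 \<le> t" "t < 1"
  shows "psi p \<rho> d t = d * (1 - t) - t * (1 - t) * tail_gf t"
proof -
  have summable_pt: "summable (\<lambda>i. p (Suc i) * t ^ Suc i)"
  proof (rule summable_comparison_test)
    show "summable (\<lambda>i. p (Suc i))" using p_sum by (auto simp: sums_iff)
    have "t ^ Suc i \<le> 1" for i using assms by (intro power_le_one) auto
    then show "\<exists>N. \<forall>i\<ge>N. norm (p (Suc i) * t ^ Suc i) \<le> p (Suc i)"
      using assms p_Suc_nonneg by (auto simp: abs_mult mult_left_le simp del: power_Suc)
  qed
  define S where "S = (\<Sum>i. p (Suc i) * t ^ Suc i)"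
  have "(\<Sum>i. p (Suc i) * t ^ (Suc i + 1)) = t * S"
    unfolding S_def using summable_pt by (subst suminf_mult[symmetric]) (auto simp: algebra_simps)
  moreover have "t * (1 - t) * tail_gf t = t * (\<rho> - S)"
  proof -
    have "(1 - t) * tail_gf t = (\<Sum>i. (1 - t) * (p (Suc i) * (\<Sum>j\<le>i. t ^ j)))"
      unfolding tail_gf_def using assms summable_tail_gf[OF assms] by (simp add: suminf_mult)
    also have "\<dots> = (\<Sum>i. p (Suc i) - p (Suc i) * t ^ Suc i)"
    proof (rule suminf_cong)
      fix i
      have "(1 - t) * (\<Sum>j\<le>i. t ^ j) = 1 - t ^ Suc i"
        by (metis one_diff_power_eq lessThan_Suc_atMost)
      then show "(1 - t) * (p (Suc i) * (\<Sum>j\<le>i. t ^ j)) = p (Suc i) - p (Suc i) * t ^ Suc i"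
        by (metis mult.left_commute right_diff_distrib' mult_1_right)
    qed
    also have "\<dots> = \<rho> - S"
      unfolding S_def using p_sum summable_pt suminf_diff[of "\<lambda>i. p (Suc i)" "\<lambda>i. p (Suc i) * t ^ Suc i"]
      by (auto simp: sums_iff)
    finally show ?thesis by (simp add: mult.assoc)
  qed
  ultimately show ?thesis
    unfolding psi_def by (simp add: algebra_simps)
qed

text \<open>Condition (L) enters only here: by \<open>harm n \<le> 1 + ln n\<close> the partial sums have bounded integrals.\<close>
lemma tail_gf_integrable: "tail_gf integrable_on {0..1}"
proof -
  define L where "L = (\<Sum>i. p (Suc i) + p (Suc i) * ln (real (Suc i)))"
  define f where "f k t = (\<Sum>i<k. p (Suc i) * (\<Sum>j\<le>i. t ^ j))" for k and t :: real
  define I where "I k = (\<Sum>i<k. p (Suc i) * harm (Suc i))" for k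
  have f_int: "(f k has_integral I k) {0<..<1}" for k
    unfolding f_def I_def has_integral_Icc_iff_Ioo[symmetric]
    by (intro has_integral_sum has_integral_mult_right has_integral_sum_powers) auto
  have I_bound: "\<bar>I k\<bar> \<le> L" for k
  proof -
    have harm_le: "harm (Suc i) \<le> 1 + ln (real (Suc i))" for i
      using euler_mascheroni_sequence_decreasing[of 1 "Suc i"] by (simp add: harm_altdef)
    have "0 \<le> I k"
      unfolding I_def using p_Suc_nonneg harm_nonneg by (intro sum_nonneg mult_nonneg_nonneg)
    moreover have "I k \<le> (\<Sum>i<k. p (Suc i) + p (Suc i) * ln (real (Suc i)))"
      unfolding I_def
      using mult_left_mono[OF harm_le p_Suc_nonneg] by (intro sum_mono) (simp add: algebra_simps)
    moreover have "\<dots> \<le> L"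
      unfolding L_def using p_sum condL p_Suc_nonneg
      by (intro sum_le_suminf summable_add) (auto simp: sums_iff)
    ultimately show ?thesis by linarith
  qed
  have "tail_gf integrable_on {0<..<1} \<and> (\<lambda>k. integral {0<..<1} (f k)) \<longlonglongrightarrow> integral {0<..<1} tail_gf"
  proof (rule monotone_convergence_increasing)
    show "f k integrable_on {0<..<1}" for k using f_int by blast
    show "f k t \<le> f (Suc k) t" if "t \<in> {0<..<1}" for k t
      unfolding f_def using that p_Suc_nonneg by (simp add: sum_nonneg)
    show "(\<lambda>k. f k t) \<longlonglongrightarrow> tail_gf t" if "t \<in> {0<..<1}" for t
      unfolding f_def tail_gf_def using that summable_tail_gf[of t] by (auto intro!: summable_LIMSEQ)
    show "bounded (range (\<lambda>k. integral {0<..<1} (f k)))"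
      unfolding bounded_iff integral_unique[OF f_int] using I_bound by (intro exI[of _ L]) auto
  qed
  then show ?thesis using integrable_on_Icc_iff_Ioo by blast
qed

definition \<alpha> :: real where "\<alpha> = d / c"

definition tail_int :: "real \<Rightarrow> real" where "tail_int v = integral {v..1} tail_gf"

definition kappa :: "real \<Rightarrow> real" where "kappa v = exp (- mfun p \<rho> d c v)"

lemma alpha_pos: "\<alpha> > 0"
  unfolding \<alpha>_def using d_pos c_pos by simp

lemma tail_int_bounds:
  assumes "0 \<le> v" "v \<le> 1"
  shows "0 \<le> tail_int v" "tail_int v \<le> tail_int 0"
proof -
  have int: "tail_gf integrable_on {v..1}"
    using assms by (intro integrable_subinterval_real[OF tail_gf_integrable]) auto
  show "0 \<le> tail_int v"
    unfolding tail_int_def using int assms tail_gf_nonneg by (intro integral_nonneg) auto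
  show "tail_int v \<le> tail_int 0"
    unfolding tail_int_def using int assms tail_gf_nonneg tail_gf_integrable
    by (intro integral_subset_le) auto
qed

lemma continuous_on_tail_int: "continuous_on {0..1} tail_int"
  unfolding tail_int_def by (rule indefinite_integral_continuous_1'[OF tail_gf_integrable])

lemma mfun_eq:
  assumes "0 < v" "v \<le> 1"
  shows "mfun p \<rho> d c v = - \<alpha> * ln v - tail_int v / c"
proof -
  have "((\<lambda>t. \<alpha> / t) has_integral \<alpha> * ln 1 - \<alpha> * ln v) {v..1}"
    using assms
    by (intro fundamental_theorem_of_calculus)
       (auto intro!: derivative_eq_intros simp: has_real_derivative_iff_has_vector_derivative[symmetric])
  moreover have "((\<lambda>t. tail_gf t / c) has_integral tail_int v / c) {v..1}"
    unfolding tail_int_def using assms integrable_subinterval_real[OF tail_gf_integrable, of v 1]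
    by (intro has_integral_divide integrable_integral) auto
  ultimately have "((\<lambda>t. \<alpha> / t - tail_gf t / c) has_integral - \<alpha> * ln v - tail_int v / c) {v..1}"
    by (auto dest: has_integral_diff)
  then have "((\<lambda>t. psi p \<rho> d t / (c * t * (1 - t))) has_integral - \<alpha> * ln v - tail_int v / c) {v..1}"
  proof (rule has_integral_spike[of "{1}", rotated 2])
    fix t assume "t \<in> {v..1} - {1}"
    then have t: "0 < t" "t < 1" using assms by auto
    then have "psi p \<rho> d t / (c * t * (1 - t)) = (d * (1 - t) - t * (1 - t) * tail_gf t) / (c * t * (1 - t))"
      by (simp add: psi_eq_tail_gf)
    also have "\<dots> = \<alpha> / t - tail_gf t / c"
      unfolding \<alpha>_def using t c_pos by (simp add: field_simps)
    finally show "psi p \<rho> d t / (c * t * (1 - t)) = \<alpha> / t - tail_gf t / c" .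
  qed auto
  then show ?thesis unfolding mfun_def by (rule integral_unique)
qed

lemma kappa_eq: "0 < v \<Longrightarrow> v \<le> 1 \<Longrightarrow> kappa v = v powr \<alpha> * exp (tail_int v / c)"
  unfolding kappa_def by (simp add: mfun_eq powr_def exp_add)

lemma kappa_pos: "kappa v > 0"
  unfolding kappa_def by simp

lemma kappa_bounds:
  assumes "0 < v" "v \<le> 1"
  shows "v powr \<alpha> \<le> kappa v" "kappa v \<le> exp (tail_int 0 / c) * v powr \<alpha>"
proof -
  have "1 \<le> exp (tail_int v / c)" "exp (tail_int v / c) \<le> exp (tail_int 0 / c)"
    using tail_int_bounds[of v] assms c_pos by (auto simp: divide_right_mono)
  then have "v powr \<alpha> * 1 \<le> v powr \<alpha> * exp (tail_int v / c)"
    "v powr \<alpha> * exp (tail_int v / c) \<le> v powr \<alpha> * exp (tail_int 0 / c)"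
    by (intro mult_left_mono; simp)+
  then show "v powr \<alpha> \<le> kappa v" "kappa v \<le> exp (tail_int 0 / c) * v powr \<alpha>"
    unfolding kappa_eq[OF assms] by (simp_all add: mult.commute)
qed

lemma continuous_on_mfun: "continuous_on {0<..1} (mfun p \<rho> d c)"
proof -
  have "continuous_on {0<..1} tail_int"
    by (rule continuous_on_subset[OF continuous_on_tail_int]) auto
  then have "continuous_on {0<..1} (\<lambda>v. - \<alpha> * ln v - tail_int v / c)"
    using c_pos by (intro continuous_intros) auto
  then show ?thesis by (rule continuous_on_eq) (simp add: mfun_eq)
qed

lemma continuous_on_kappa: "continuous_on {0<..1} kappa"
  unfolding kappa_def[abs_def] by (intro continuous_intros continuous_on_mfun)

abbreviation "\<theta> \<equiv> theta p \<rho> d c"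
abbreviation "\<phi> \<equiv> phi p \<rho> d c"
abbreviation "\<xi> \<equiv> xi p \<rho> d c"
abbreviation "I\<^sub>\<xi> \<equiv> Ixi p \<rho> d c"
abbreviation "r \<equiv> rfun p \<rho> d c"

lemma has_real_derivative_theta:
  assumes "0 < v" "v < 1"
  shows "(\<theta> has_real_derivative - 1 / kappa v) (at v)"
proof -
  have "continuous_on {v/2..1} (mfun p \<rho> d c)"
    by (rule continuous_on_subset[OF continuous_on_mfun]) (use assms in auto)
  then have "continuous_on {v/2..1} (\<lambda>t. exp (mfun p \<rho> d c t))"
    by (intro continuous_intros)
  then have "(\<theta> has_real_derivative - exp (mfun p \<rho> d c v)) (at v within {v/2..1})"
    unfolding theta_def using assms by (intro integral_has_real_derivative') auto
  moreover have "at v within {v/2..1} = at v"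
    using assms by (intro at_within_interior) auto
  ultimately show ?thesis
    unfolding kappa_def by (simp add: exp_minus inverse_eq_divide)
qed

lemma continuous_on_theta: "0 < u \<Longrightarrow> continuous_on {u..1} \<theta>"
  unfolding theta_def
  by (intro indefinite_integral_continuous_1' integrable_continuous_real continuous_intros
      continuous_on_subset[OF continuous_on_mfun]) auto

lemma theta_strict_antimono:
  assumes "0 < x" "x < y" "y \<le> 1"
  shows "\<theta> y < \<theta> x"
proof (rule DERIV_neg_imp_decreasing_open[OF assms(2)])
  show "\<exists>D. (\<theta> has_real_derivative D) (at z) \<and> D < 0" if "x < z" "z < y" for z
    using has_real_derivative_theta[of z] kappa_pos[of z] that assms by fastforce
  show "continuous_on {x..y} \<theta>"
    by (rule continuous_on_subset[OF continuous_on_theta[of x]]) (use assms in auto)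
qed

lemma theta_antimono: "0 < x \<Longrightarrow> x \<le> y \<Longrightarrow> y \<le> 1 \<Longrightarrow> \<theta> y \<le> \<theta> x"
  using theta_strict_antimono[of x y] by (cases "x = y") auto

lemma theta_less_iff: "0 < x \<Longrightarrow> x \<le> 1 \<Longrightarrow> 0 < y \<Longrightarrow> y \<le> 1 \<Longrightarrow> \<theta> x < \<theta> y \<longleftrightarrow> y < x"
  using theta_strict_antimono by (metis linorder_neq_iff order.asym)

lemma theta_inj: "0 < x \<Longrightarrow> x \<le> 1 \<Longrightarrow> 0 < y \<Longrightarrow> y \<le> 1 \<Longrightarrow> \<theta> x = \<theta> y \<Longrightarrow> x = y"
  using theta_strict_antimono by (metis linorder_neq_iff order_less_imp_le)

lemma theta_1: "\<theta> 1 = 0"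
  unfolding theta_def by simp

lemma theta_pos: "0 < v \<Longrightarrow> v < 1 \<Longrightarrow> 0 < \<theta> v"
  using theta_strict_antimono[of v 1] theta_1 by simp

lemma theta_less_xi:
  assumes "0 < v" "v < 1"
  shows "ereal (\<theta> v) < \<xi>"
proof -
  have "ereal (\<theta> v) < ereal (\<theta> (v/2))"
    using assms theta_strict_antimono[of "v/2" v] by simp
  also have "\<dots> \<le> \<xi>"
    unfolding xi_def using assms by (intro SUP_upper) auto
  finally show ?thesis .
qed

lemma theta_in_Ixi: "0 < v \<Longrightarrow> v < 1 \<Longrightarrow> \<theta> v \<in> I\<^sub>\<xi>"
  unfolding Ixi_def using theta_pos theta_less_xi by auto

lemma is_interval_Ixi: "is_interval I\<^sub>\<xi>"
  unfolding is_interval_1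
proof (intro ballI allI impI)
  fix a b x assume "a \<in> I\<^sub>\<xi>" "b \<in> I\<^sub>\<xi>" "a \<le> x \<and> x \<le> b"
  then have "0 < x" "ereal x \<le> ereal b" "ereal b < \<xi>" unfolding Ixi_def by auto
  then show "x \<in> I\<^sub>\<xi>" unfolding Ixi_def using order.strict_trans1 by blast
qed

lemma theta_surj_Ixi:
  assumes "s \<in> I\<^sub>\<xi>"
  obtains v where "0 < v" "v < 1" "\<theta> v = s"
proof -
  have s: "0 < s" "ereal s < \<xi>" using assms unfolding Ixi_def by auto
  then obtain u where u: "0 < u" "u \<le> 1" "s < \<theta> u"
    unfolding xi_def less_SUP_iff by auto
  then obtain v where "u \<le> v" "v \<le> 1" "\<theta> v = s"
    using IVT2'[of \<theta> 1 s u] continuous_on_theta[of u] theta_1 s by auto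
  moreover have "v \<noteq> 1" using \<open>\<theta> v = s\<close> theta_1 s by auto
  ultimately show ?thesis using u(1) by (intro that[of v]) auto
qed

lemma phi_theta: "0 < v \<Longrightarrow> v \<le> 1 \<Longrightarrow> \<phi> (\<theta> v) = v"
  unfolding phi_def by (rule the1_equality) (use theta_inj in auto)

lemma
  assumes "s \<in> I\<^sub>\<xi>"
  shows phi_in_Ioo: "0 < \<phi> s \<and> \<phi> s < 1" and theta_phi: "\<theta> (\<phi> s) = s"
proof -
  obtain v where "0 < v" "v < 1" "\<theta> v = s" using theta_surj_Ixi[OF assms] .
  moreover from this have "\<phi> s = v" using phi_theta by auto
  ultimately show "0 < \<phi> s \<and> \<phi> s < 1" "\<theta> (\<phi> s) = s" by auto
qed

lemma
  assumes "s \<in> I\<^sub>\<xi>" "0 < v" "v < 1"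
  shows phi_less_iff: "\<phi> s < v \<longleftrightarrow> \<theta> v < s" and less_phi_iff: "v < \<phi> s \<longleftrightarrow> s < \<theta> v"
  using theta_less_iff[of v "\<phi> s"] theta_less_iff[of "\<phi> s" v] assms(2,3)
    phi_in_Ioo[OF assms(1)] theta_phi[OF assms(1)] by auto

lemma has_real_derivative_phi:
  assumes s: "s \<in> I\<^sub>\<xi>"
  shows "(\<phi> has_real_derivative - kappa (\<phi> s)) (at s)"
proof -
  define v where "v = \<phi> s"
  have v: "0 < v" "v < 1" "\<theta> v = s"
    using phi_in_Ioo[OF s] theta_phi[OF s] unfolding v_def by auto
  have "isCont \<phi> (\<theta> v)"
  proof (rule isCont_inverse_function2[of "v/2" v "(1 + v)/2"])
    show "\<phi> (\<theta> z) = z" if "v/2 \<le> z" "z \<le> (1 + v)/2" for z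
      using that v by (intro phi_theta) auto
    show "isCont \<theta> z" if "v/2 \<le> z" "z \<le> (1 + v)/2" for z
      using that v has_real_derivative_theta[of z] by (intro DERIV_isCont) auto
  qed (use v in auto)
  then have cont: "isCont \<phi> s" using v by simp
  define b where "b = \<theta> (v/2)"
  have "s < b" unfolding b_def using v theta_strict_antimono[of "v/2" v] by auto
  have b_xi: "ereal b < \<xi>" unfolding b_def using v theta_less_xi[of "v/2"] by auto
  have "(\<phi> has_real_derivative inverse (- 1 / kappa v)) (at s)"
  proof (rule DERIV_inverse_function[where a = 0 and b = b])
    show "(\<theta> has_real_derivative - 1 / kappa v) (at (\<phi> s))"
      using has_real_derivative_theta v unfolding v_def by auto
    show "\<theta> (\<phi> y) = y" if "0 < y" "y < b" for y
    proof -
      have "ereal y < ereal b" using that(2) by simp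
      then have "ereal y < \<xi>" using b_xi by (rule order.strict_trans)
      then show ?thesis using that(1) theta_phi[of y] unfolding Ixi_def by simp
    qed
  qed (use kappa_pos[of v] v theta_pos[OF v(1,2)] \<open>s < b\<close> cont in auto)
  then show ?thesis unfolding v_def by (simp add: kappa_pos less_imp_neq[OF kappa_pos, symmetric])
qed

lemma rfun_eq: "s \<in> I\<^sub>\<xi> \<Longrightarrow> r s = kappa (\<phi> s) / sqrt (c * \<phi> s * (1 - \<phi> s))"
  unfolding rfun_def using DERIV_imp_deriv[OF has_real_derivative_phi] kappa_pos[of "\<phi> s"] by simp

lemma eventually_at_xi:
  assumes "0 < v" "v < 1"
  shows "eventually (\<lambda>s. s \<in> I\<^sub>\<xi> \<and> \<theta> v < s) (at_xi p \<rho> d c)"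
proof (cases "\<xi> = \<infinity>")
  case True
  have "eventually (\<lambda>s. \<theta> v < s) at_top" by (rule eventually_gt_at_top)
  then have "eventually (\<lambda>s. 0 < s \<and> \<theta> v < s) at_top"
    by (rule eventually_mono) (use theta_pos[OF assms] in auto)
  then show ?thesis
    unfolding at_xi_def Ixi_def using True theta_pos[OF assms] by (auto elim!: eventually_mono)
next
  case False
  have "\<xi> \<noteq> - \<infinity>" using theta_less_xi[OF assms] by auto
  with False obtain R where R: "\<xi> = ereal R" by (cases \<xi>) auto
  then have "\<theta> v < R" using theta_less_xi[OF assms] by simp
  then have "eventually (\<lambda>s. s \<in> {\<theta> v<..<R}) (at_left R)" by (rule eventually_at_left_real)
  then show ?thesis
    unfolding at_xi_def Ixi_def using R False theta_pos[OF assms] by (auto elim!: eventually_mono)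
qed

lemma theta_intervals_exhaust_Ixi:
  assumes x: "x \<in> I\<^sub>\<xi>"
  obtains n :: nat where "\<theta> (1 - 1 / real (n + 2)) \<le> x" "x \<le> \<theta> (1 / real (n + 2))"
proof -
  have v: "0 < \<phi> x" "\<phi> x < 1" using phi_in_Ioo[OF x] by auto
  obtain n where n: "inverse (real (Suc n)) < min (\<phi> x) (1 - \<phi> x)"
    using v reals_Archimedean[of "min (\<phi> x) (1 - \<phi> x)"] by auto
  have "1 / real (n + 2) < inverse (real (Suc n))"
    unfolding inverse_eq_divide by (intro divide_strict_left_mono) auto
  then have "1 / real (n + 2) < \<phi> x" "\<phi> x < 1 - 1 / real (n + 2)" using n by auto
  then show ?thesis
    using theta_less_iff[of "1 - 1 / real (n + 2)" "\<phi> x"] theta_less_iff[of "\<phi> x" "1 / real (n + 2)"]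
      v theta_phi[OF x] by (intro that[of n]) auto
qed

lemma at_xi_neq_bot: "at_xi p \<rho> d c \<noteq> bot"
  unfolding at_xi_def by auto

end

locale riccati_eq = riccati_coeff +
  fixes q :: real
  assumes q_pos: "q > 0"
begin

definition pot :: "real \<Rightarrow> real" where "pot t = q * kappa t / (c * t * (1 - t))"

definition pot_int :: "real \<Rightarrow> real" where "pot_int v = integral {0..v} pot"

definition pot_const :: real where "pot_const = q * exp (tail_int 0 / c) / c"

definition ratio_bound :: "real \<Rightarrow> real" where
  "ratio_bound v = pot_const * (1 / \<alpha> - ln (1 - v))"

lemma pot_const_pos: "pot_const > 0"
  unfolding pot_const_def using q_pos c_pos by simp

lemma continuous_on_pot: "continuous_on {0<..<1} pot"
proof -
  have "continuous_on {0<..<1} kappa"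
    by (rule continuous_on_subset[OF continuous_on_kappa]) auto
  then show ?thesis
    unfolding pot_def[abs_def] using c_pos by (intro continuous_intros) auto
qed

lemma pot_nonneg: "0 \<le> t \<Longrightarrow> t \<le> 1 \<Longrightarrow> 0 \<le> pot t"
  unfolding pot_def using q_pos c_pos kappa_pos[of t] by simp

lemma pot_pos: "0 < t \<Longrightarrow> t < 1 \<Longrightarrow> 0 < pot t"
  unfolding pot_def using q_pos c_pos kappa_pos[of t] by simp

lemma pot_le:
  assumes "0 < t" "t \<le> v" "v < 1"
  shows "pot t \<le> pot_const * (t powr (\<alpha> - 1) + v powr \<alpha> / (1 - t))"
proof -
  have t: "0 < t" "t < 1" using assms by auto
  have "pot t \<le> q * (exp (tail_int 0 / c) * t powr \<alpha>) / (c * t * (1 - t))"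
    unfolding pot_def using kappa_bounds(2)[of t] t q_pos c_pos
    by (intro divide_right_mono mult_left_mono) auto
  also have "\<dots> = pot_const * (t powr (\<alpha> - 1) + t powr \<alpha> / (1 - t))"
    unfolding pot_const_def using t c_pos by (simp add: field_simps powr_diff)
  also have "\<dots> \<le> pot_const * (t powr (\<alpha> - 1) + v powr \<alpha> / (1 - t))"
    using assms t alpha_pos pot_const_pos
    by (intro mult_left_mono add_left_mono divide_right_mono powr_mono2) auto
  finally show ?thesis .
qed

lemma has_integral_pot_majorant:
  assumes "0 \<le> v" "v < 1"
  shows "((\<lambda>t. pot_const * (t powr (\<alpha> - 1) + v powr \<alpha> / (1 - t))) has_integral
           v powr \<alpha> * ratio_bound v) {0..v}"
proof -
  have "((\<lambda>t. t powr (\<alpha> - 1)) has_integral v powr (\<alpha> - 1 + 1) / (\<alpha> - 1 + 1)) {0..v}"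
    using alpha_pos assms by (intro has_integral_powr_from_0) auto
  then have powr_int: "((\<lambda>t. t powr (\<alpha> - 1)) has_integral v powr \<alpha> / \<alpha>) {0..v}"
    by simp
  have inv_int: "((\<lambda>t. v powr \<alpha> * (1 / (1 - t))) has_integral v powr \<alpha> * - ln (1 - v)) {0..v}"
    using has_integral_mult_right[OF has_integral_inverse_one_minus[OF assms]] .
  from has_integral_mult_right[OF has_integral_add[OF powr_int inv_int], of pot_const] show ?thesis
    unfolding ratio_bound_def by (simp add: algebra_simps)
qed

lemma pot_integrable:
  assumes "0 \<le> v" "v < 1"
  shows "pot integrable_on {0..v}"
proof (rule integrable_on_Icc_if_continuous_dominated)
  show "continuous_on {0<..v} pot"
    by (rule continuous_on_subset[OF continuous_on_pot]) (use assms in auto)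
  show "\<bar>pot t\<bar> \<le> pot_const * (t powr (\<alpha> - 1) + v powr \<alpha> / (1 - t))" if "t \<in> {0<..v}" for t
    using pot_le[of t v] pot_nonneg[of t] that assms by auto
  show "(\<lambda>t. pot_const * (t powr (\<alpha> - 1) + v powr \<alpha> / (1 - t))) integrable_on {0..v}"
    using has_integral_pot_majorant[OF assms] by blast
qed

lemma pot_int_nonneg: "0 \<le> v \<Longrightarrow> v < 1 \<Longrightarrow> 0 \<le> pot_int v"
  unfolding pot_int_def using pot_nonneg by (intro integral_nonneg pot_integrable) auto

lemma pot_int_le:
  assumes "0 \<le> v" "v < 1"
  shows "pot_int v \<le> v powr \<alpha> * ratio_bound v"
  unfolding pot_int_def
proof (rule has_integral_le[OF integrable_integral[OF pot_integrable[OF assms]]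
      has_integral_pot_majorant[OF assms]])
  fix t assume t: "t \<in> {0..v}"
  show "pot t \<le> pot_const * (t powr (\<alpha> - 1) + v powr \<alpha> / (1 - t))"
  proof (cases "t = 0")
    case True
    then show ?thesis using pot_const_pos assms by (simp add: pot_def)
  next
    case False
    then show ?thesis using pot_le[of t v] t assms by auto
  qed
qed

lemma ratio_bound_nonneg:
  assumes "0 \<le> v" "v < 1"
  shows "0 \<le> ratio_bound v"
proof -
  have "ln (1 - v) \<le> 0" using assms by simp
  moreover have "0 < 1 / \<alpha>" using alpha_pos by simp
  ultimately have "0 \<le> 1 / \<alpha> - ln (1 - v)" by linarith
  then show ?thesis
    unfolding ratio_bound_def using pot_const_pos by simp
qed

lemma pot_int_le_kappa:
  assumes "0 \<le> v" "v < 1"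
  shows "pot_int v \<le> kappa v * ratio_bound v"
proof (cases "v = 0")
  case True
  then show ?thesis
    using kappa_pos[of 0] ratio_bound_nonneg[of 0] by (simp add: pot_int_def)
next
  case False
  then have "v powr \<alpha> * ratio_bound v \<le> kappa v * ratio_bound v"
    using assms kappa_bounds(1)[of v] ratio_bound_nonneg[of v] by (intro mult_right_mono) auto
  then show ?thesis using pot_int_le[OF assms] by linarith
qed

definition growth_bound :: "real \<Rightarrow> real" where
  "growth_bound v = exp (pot_const * (v / \<alpha> + v + (1 - v) * ln (1 - v)))"

lemma growth_bound_has_derivative:
  assumes "v < 1"
  shows "(growth_bound has_real_derivative ratio_bound v * growth_bound v) (at v)"
proof -
  have "((\<lambda>t. t / \<alpha> + t + (1 - t) * ln (1 - t)) has_real_derivative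
      1 / \<alpha> + 1 + ((0 - 1) * ln (1 - v) + (1 - v) * (inverse (1 - v) * (0 - 1)))) (at v)"
    using assms alpha_pos by (intro derivative_eq_intros) auto
  moreover have "(1 - v) * (inverse (1 - v) * (0 - 1)) = -1" using assms by simp
  ultimately have "((\<lambda>t. t / \<alpha> + t + (1 - t) * ln (1 - t)) has_real_derivative 1 / \<alpha> - ln (1 - v)) (at v)"
    by simp
  then have "((\<lambda>t. pot_const * (t / \<alpha> + t + (1 - t) * ln (1 - t))) has_real_derivative ratio_bound v) (at v)"
    unfolding ratio_bound_def by (rule DERIV_cmult)
  from DERIV_chain2[OF DERIV_exp this] show ?thesis
    unfolding growth_bound_def[abs_def] by (simp add: mult.commute)
qed

lemma has_integral_ratio_growth:
  fixes v :: real
  assumes "0 \<le> v" "v < 1"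
  shows "((\<lambda>t. ratio_bound t * growth_bound t) has_integral growth_bound v - 1) {0..v}"
proof -
  have "((\<lambda>t. ratio_bound t * growth_bound t) has_integral growth_bound v - growth_bound 0) {0..v}"
    using assms growth_bound_has_derivative
    by (intro fundamental_theorem_of_calculus)
       (auto simp: has_real_derivative_iff_has_vector_derivative[symmetric] has_field_derivative_at_within)
  then show ?thesis by (simp add: growth_bound_def)
qed

lemma growth_bound_ge_1:
  assumes "0 \<le> v" "v < 1"
  shows "1 \<le> growth_bound v"
proof -
  have "0 \<le> growth_bound v - 1"
  proof (rule has_integral_nonneg[OF has_integral_ratio_growth[OF assms]])
    show "0 \<le> ratio_bound t * growth_bound t" if "t \<in> {0..v}" for t
      using that assms ratio_bound_nonneg[of t] by (intro mult_nonneg_nonneg) (auto simp: growth_bound_def)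
  qed
  then show ?thesis by simp
qed

lemma growth_bound_le:
  assumes "0 \<le> v" "v < 1"
  shows "growth_bound v \<le> exp (pot_const * (1 / \<alpha> + 1))"
proof -
  have "(1 - v) * ln (1 - v) \<le> 0"
    using assms by (intro mult_nonneg_nonpos) auto
  moreover have "v / \<alpha> \<le> 1 / \<alpha>"
    using assms alpha_pos by (intro divide_right_mono) auto
  ultimately show ?thesis
    unfolding growth_bound_def using assms pot_const_pos by (auto intro!: mult_left_mono)
qed

definition admissible :: "(real \<Rightarrow> real) \<Rightarrow> bool" where
  "admissible u \<longleftrightarrow> (\<forall>b\<in>{0..<1}. continuous_on {0..b} u) \<and>
     (\<forall>x\<in>{0..<1}. 1 \<le> u x \<and> u x \<le> growth_bound x) \<and> mono_on {0..<1} u"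

text \<open>Integral form of \<open>(kappa U')' = pot U\<close>, \<open>U 0 = 1\<close>, \<open>(kappa U') 0 = 0\<close>, where \<open>flux U = kappa U'\<close>.\<close>
definition flux :: "(real \<Rightarrow> real) \<Rightarrow> real \<Rightarrow> real" where
  "flux u t = integral {0..t} (\<lambda>x. pot x * u x)"

definition picard :: "(real \<Rightarrow> real) \<Rightarrow> real \<Rightarrow> real" where
  "picard u v = 1 + integral {0..v} (\<lambda>t. flux u t / kappa t)"

lemma admissibleD:
  assumes "admissible u"
  shows "\<And>b. 0 \<le> b \<Longrightarrow> b < 1 \<Longrightarrow> continuous_on {0..b} u"
    and "\<And>x. 0 \<le> x \<Longrightarrow> x < 1 \<Longrightarrow> 1 \<le> u x"
    and "\<And>x. 0 \<le> x \<Longrightarrow> x < 1 \<Longrightarrow> u x \<le> growth_bound x"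
    and "\<And>x y. 0 \<le> x \<Longrightarrow> x \<le> y \<Longrightarrow> y < 1 \<Longrightarrow> u x \<le> u y"
  using assms unfolding admissible_def by (auto intro: mono_onD)

lemma pot_mult_integrable:
  assumes "admissible u" "0 \<le> t" "t < 1"
  shows "(\<lambda>x. pot x * u x) integrable_on {0..t}"
proof (rule integrable_on_Icc_if_continuous_dominated)
  show "continuous_on {0<..t} (\<lambda>x. pot x * u x)"
    by (intro continuous_on_mult continuous_on_subset[OF continuous_on_pot]
        continuous_on_subset[OF admissibleD(1)[OF assms]]) (use assms in auto)
  show "\<bar>pot x * u x\<bar> \<le> pot x * u t" if "x \<in> {0<..t}" for x
    using that assms pot_nonneg[of x] admissibleD(2,4)[OF assms(1), of x]
    by (simp add: abs_mult mult_left_mono)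
  show "(\<lambda>x. pot x * u t) integrable_on {0..t}"
    by (intro integrable_on_mult_left pot_integrable) (use assms in auto)
qed

lemma flux_nonneg: "admissible u \<Longrightarrow> 0 \<le> t \<Longrightarrow> t < 1 \<Longrightarrow> 0 \<le> flux u t"
  unfolding flux_def using pot_nonneg admissibleD(2)
  by (intro integral_nonneg pot_mult_integrable mult_nonneg_nonneg) force+

lemma flux_le_pot_int:
  assumes "admissible u" "0 \<le> t" "t < 1"
  shows "flux u t \<le> pot_int t * u t"
proof -
  have "flux u t \<le> integral {0..t} (\<lambda>x. pot x * u t)"
    unfolding flux_def
  proof (rule integral_le[OF pot_mult_integrable[OF assms]])
    show "(\<lambda>x. pot x * u t) integrable_on {0..t}"
      by (intro integrable_on_mult_left pot_integrable) (use assms in auto)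
    show "pot x * u x \<le> pot x * u t" if "x \<in> {0..t}" for x
      using that assms pot_nonneg[of x] admissibleD(4)[OF assms(1), of x t] by (auto intro: mult_left_mono)
  qed
  then show ?thesis unfolding pot_int_def by simp
qed

lemma continuous_on_flux: "admissible u \<Longrightarrow> 0 \<le> b \<Longrightarrow> b < 1 \<Longrightarrow> continuous_on {0..b} (flux u)"
  unfolding flux_def[abs_def] by (rule indefinite_integral_continuous_1[OF pot_mult_integrable])

lemma flux_div_kappa_bounds:
  assumes "admissible u" "0 \<le> t" "t < 1"
  shows "0 \<le> flux u t / kappa t" "flux u t / kappa t \<le> ratio_bound t * growth_bound t"
proof -
  show "0 \<le> flux u t / kappa t" using flux_nonneg[OF assms] kappa_pos[of t] by simp
  have "flux u t / kappa t \<le> pot_int t * u t / kappa t"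
    using flux_le_pot_int[OF assms] kappa_pos[of t] by (simp add: divide_right_mono)
  also have "\<dots> \<le> ratio_bound t * u t"
    using pot_int_le_kappa[of t] kappa_pos[of t] assms admissibleD(2)[OF assms(1), of t]
    by (simp add: divide_le_eq mult_right_mono mult.commute mult.left_commute)
  also have "\<dots> \<le> ratio_bound t * growth_bound t"
    using ratio_bound_nonneg[of t] assms admissibleD(3)[OF assms(1), of t] by (intro mult_left_mono) auto
  finally show "flux u t / kappa t \<le> ratio_bound t * growth_bound t" .
qed

lemma flux_div_kappa_integrable:
  assumes "admissible u" "0 \<le> v" "v < 1"
  shows "(\<lambda>t. flux u t / kappa t) integrable_on {0..v}"
proof (rule integrable_on_Icc_if_continuous_dominated)
  show "continuous_on {0<..v} (\<lambda>t. flux u t / kappa t)"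
  proof (rule continuous_on_divide)
    show "continuous_on {0<..v} (flux u)"
      by (rule continuous_on_subset[OF continuous_on_flux[OF assms]]) auto
    show "continuous_on {0<..v} kappa"
      by (rule continuous_on_subset[OF continuous_on_kappa]) (use assms in auto)
  qed (use kappa_pos in \<open>auto simp: less_imp_neq[symmetric]\<close>)
  show "\<bar>flux u t / kappa t\<bar> \<le> ratio_bound t * growth_bound t" if "t \<in> {0<..v}" for t
    using flux_div_kappa_bounds[OF assms(1), of t] that assms by auto
  show "(\<lambda>t. ratio_bound t * growth_bound t) integrable_on {0..v}"
    using has_integral_ratio_growth[OF assms(2,3)] by blast
qed

lemma admissible_picard:
  assumes "admissible u"
  shows "admissible (picard u)"
  unfolding admissible_def
proof (intro conjI ballI mono_onI)
  fix b :: real assume "b \<in> {0..<1}"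
  then show "continuous_on {0..b} (picard u)"
    unfolding picard_def[abs_def]
    by (intro continuous_intros indefinite_integral_continuous_1 flux_div_kappa_integrable assms) auto
next
  fix x :: real assume x: "x \<in> {0..<1}"
  have "0 \<le> integral {0..x} (\<lambda>t. flux u t / kappa t)"
    using x flux_div_kappa_bounds(1)[OF assms] by (intro integral_nonneg flux_div_kappa_integrable assms) auto
  then show "1 \<le> picard u x" unfolding picard_def by simp
  have "integral {0..x} (\<lambda>t. flux u t / kappa t) \<le> integral {0..x} (\<lambda>t. ratio_bound t * growth_bound t)"
    using x flux_div_kappa_bounds(2)[OF assms] has_integral_ratio_growth[of x]
    by (intro integral_le flux_div_kappa_integrable assms) (auto intro: has_integral_integrable)
  also have "\<dots> = growth_bound x - 1"
    using has_integral_ratio_growth[of x] x by (simp add: integral_unique)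
  finally show "picard u x \<le> growth_bound x" unfolding picard_def by simp
next
  fix x y :: real assume "x \<in> {0..<1}" "y \<in> {0..<1}" "x \<le> y"
  then have "integral {0..x} (\<lambda>t. flux u t / kappa t) \<le> integral {0..y} (\<lambda>t. flux u t / kappa t)"
    using flux_div_kappa_bounds(1)[OF assms]
    by (intro integral_subset_le flux_div_kappa_integrable assms) auto
  then show "picard u x \<le> picard u y" unfolding picard_def by simp
qed

lemma flux_mono:
  assumes "admissible u" "admissible u'" "\<And>x. 0 \<le> x \<Longrightarrow> x < 1 \<Longrightarrow> u x \<le> u' x" "0 \<le> t" "t < 1"
  shows "flux u t \<le> flux u' t"
  unfolding flux_def using assms pot_nonneg
  by (intro integral_le pot_mult_integrable) (auto intro: mult_left_mono)

lemma picard_mono: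
  assumes "admissible u" "admissible u'" "\<And>x. 0 \<le> x \<Longrightarrow> x < 1 \<Longrightarrow> u x \<le> u' x" "0 \<le> v" "v < 1"
  shows "picard u v \<le> picard u' v"
proof -
  have "integral {0..v} (\<lambda>t. flux u t / kappa t) \<le> integral {0..v} (\<lambda>t. flux u' t / kappa t)"
  proof (rule integral_le)
    show "(\<lambda>t. flux u t / kappa t) integrable_on {0..v}"
      by (rule flux_div_kappa_integrable[OF assms(1,4,5)])
    show "(\<lambda>t. flux u' t / kappa t) integrable_on {0..v}"
      by (rule flux_div_kappa_integrable[OF assms(2,4,5)])
    show "flux u t / kappa t \<le> flux u' t / kappa t" if "t \<in> {0..v}" for t
      using flux_mono[OF assms(1-3), of t] that assms(5) kappa_pos[of t] by (auto intro: divide_right_mono)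
  qed
  then show ?thesis unfolding picard_def by simp
qed

definition picard_iter :: "nat \<Rightarrow> real \<Rightarrow> real" where
  "picard_iter n = (picard ^^ n) (\<lambda>_. 1)"

lemma admissible_picard_iter: "admissible (picard_iter n)"
proof (induction n)
  case 0
  show ?case
    unfolding picard_iter_def admissible_def using growth_bound_ge_1 by (auto intro: mono_onI)
next
  case (Suc n)
  then show ?case
    unfolding picard_iter_def by (simp add: admissible_picard)
qed

lemma picard_iter_le_Suc: "0 \<le> x \<Longrightarrow> x < 1 \<Longrightarrow> picard_iter n x \<le> picard_iter (Suc n) x"
proof (induction n arbitrary: x)
  case 0
  then show ?case
    using admissibleD(2)[OF admissible_picard_iter[of 1]] by (simp add: picard_iter_def)
next
  case (Suc n)
  then show ?case
    using picard_mono[OF admissible_picard_iter admissible_picard_iter, of n "Suc n" x]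
    by (simp add: picard_iter_def)
qed

definition U :: "real \<Rightarrow> real" where
  "U v = (SUP n. picard_iter n v)"

lemma picard_iter_tendsto_U:
  assumes "0 \<le> v" "v < 1"
  shows "(\<lambda>n. picard_iter n v) \<longlonglongrightarrow> U v"
  unfolding U_def
proof (rule LIMSEQ_incseq_SUP)
  show "bdd_above (range (\<lambda>n. picard_iter n v))"
    using admissibleD(3)[OF admissible_picard_iter] assms by (intro bdd_aboveI[of _ "growth_bound v"]) auto
  show "incseq (\<lambda>n. picard_iter n v)"
    using picard_iter_le_Suc assms by (intro incseq_SucI) auto
qed

lemma flux_picard_iter_tendsto:
  assumes "0 \<le> t" "t < 1"
  shows "(\<lambda>x. pot x * U x) integrable_on {0..t} \<and> (\<lambda>n. flux (picard_iter n) t) \<longlonglongrightarrow> flux U t"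
proof -
  have "(\<lambda>x. pot x * U x) integrable_on {0..t} \<and>
        (\<lambda>n. integral {0..t} (\<lambda>x. pot x * picard_iter n x)) \<longlonglongrightarrow> integral {0..t} (\<lambda>x. pot x * U x)"
  proof (rule monotone_convergence_increasing)
    show "(\<lambda>x. pot x * picard_iter n x) integrable_on {0..t}" for n
      by (rule pot_mult_integrable[OF admissible_picard_iter assms])
    show "pot x * picard_iter n x \<le> pot x * picard_iter (Suc n) x" if "x \<in> {0..t}" for n x
      using that assms pot_nonneg[of x] picard_iter_le_Suc[of x n] by (auto intro: mult_left_mono)
    show "(\<lambda>n. pot x * picard_iter n x) \<longlonglongrightarrow> pot x * U x" if "x \<in> {0..t}" for x
      using that assms by (intro tendsto_mult_left picard_iter_tendsto_U) auto
    have "\<bar>flux (picard_iter n) t\<bar> \<le> pot_int t * growth_bound t" for n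
    proof -
      have "0 \<le> flux (picard_iter n) t" "flux (picard_iter n) t \<le> pot_int t * picard_iter n t"
        using flux_nonneg flux_le_pot_int admissible_picard_iter assms by auto
      moreover have "pot_int t * picard_iter n t \<le> pot_int t * growth_bound t"
        using pot_int_nonneg[OF assms] admissibleD(3)[OF admissible_picard_iter assms]
        by (intro mult_left_mono)
      ultimately show ?thesis by simp
    qed
    then show "bounded (range (\<lambda>n. integral {0..t} (\<lambda>x. pot x * picard_iter n x)))"
      unfolding bounded_iff flux_def by auto
  qed
  then show ?thesis unfolding flux_def by simp
qed

lemma picard_picard_iter_tendsto:
  assumes "0 \<le> v" "v < 1"
  shows "(\<lambda>t. flux U t / kappa t) integrable_on {0..v} \<and> (\<lambda>n. picard (picard_iter n) v) \<longlonglongrightarrow> picard U v"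
proof -
  have "(\<lambda>t. flux U t / kappa t) integrable_on {0..v} \<and>
        (\<lambda>n. integral {0..v} (\<lambda>t. flux (picard_iter n) t / kappa t)) \<longlonglongrightarrow>
          integral {0..v} (\<lambda>t. flux U t / kappa t)"
  proof (rule monotone_convergence_increasing)
    show "(\<lambda>t. flux (picard_iter n) t / kappa t) integrable_on {0..v}" for n
      by (rule flux_div_kappa_integrable[OF admissible_picard_iter assms])
    show "flux (picard_iter n) x / kappa x \<le> flux (picard_iter (Suc n)) x / kappa x" if "x \<in> {0..v}" for n x
      using that assms kappa_pos[of x] picard_iter_le_Suc
      by (intro divide_right_mono flux_mono admissible_picard_iter) auto
    show "(\<lambda>n. flux (picard_iter n) x / kappa x) \<longlonglongrightarrow> flux U x / kappa x" if "x \<in> {0..v}" for x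
      using that assms flux_picard_iter_tendsto[of x] kappa_pos[of x]
      by (intro tendsto_divide tendsto_const) auto
    have "\<bar>integral {0..v} (\<lambda>t. flux (picard_iter n) t / kappa t)\<bar> \<le> growth_bound v - 1" for n
    proof -
      have "0 \<le> integral {0..v} (\<lambda>t. flux (picard_iter n) t / kappa t)"
        using assms flux_div_kappa_bounds(1)[OF admissible_picard_iter]
        by (intro integral_nonneg flux_div_kappa_integrable admissible_picard_iter) auto
      moreover have "picard (picard_iter n) v \<le> growth_bound v"
        using admissibleD(3)[OF admissible_picard[OF admissible_picard_iter] assms] .
      ultimately show ?thesis unfolding picard_def by simp
    qed
    then show "bounded (range (\<lambda>n. integral {0..v} (\<lambda>t. flux (picard_iter n) t / kappa t)))"
      unfolding bounded_iff by auto
  qed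
  then show ?thesis unfolding picard_def by (auto intro: tendsto_add)
qed

lemma U_eq_picard: "0 \<le> v \<Longrightarrow> v < 1 \<Longrightarrow> U v = picard U v"
  using LIMSEQ_unique[OF LIMSEQ_Suc[OF picard_iter_tendsto_U]] picard_picard_iter_tendsto
  by (simp add: picard_iter_def)

lemma admissible_U: "admissible U"
  unfolding admissible_def
proof (intro conjI ballI mono_onI)
  fix b :: real assume b: "b \<in> {0..<1}"
  have "continuous_on {0..b} (picard U)"
    unfolding picard_def[abs_def] using picard_picard_iter_tendsto b
    by (intro continuous_intros indefinite_integral_continuous_1) auto
  then show "continuous_on {0..b} U"
    by (rule continuous_on_eq) (use U_eq_picard b in auto)
next
  fix x :: real assume x: "x \<in> {0..<1}"
  show "1 \<le> U x"
    using LIMSEQ_le_const[OF picard_iter_tendsto_U, of x 1] x admissibleD(2)[OF admissible_picard_iter] by auto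
  show "U x \<le> growth_bound x"
    using LIMSEQ_le_const2[OF picard_iter_tendsto_U, of x "growth_bound x"] x
      admissibleD(3)[OF admissible_picard_iter] by auto
next
  fix x y :: real assume "x \<in> {0..<1}" "y \<in> {0..<1}" "x \<le> y"
  then show "U x \<le> U y"
    using LIMSEQ_le[OF picard_iter_tendsto_U picard_iter_tendsto_U, of x y]
      admissibleD(4)[OF admissible_picard_iter] by auto
qed

lemma flux_U_has_derivative:
  assumes "0 < v" "v < 1"
  shows "(flux U has_real_derivative pot v * U v) (at v)"
  unfolding flux_def[abs_def]
proof (rule has_real_derivative_integral_upper[where b = "(1 + v) / 2"])
  show "(\<lambda>x. pot x * U x) integrable_on {0..(1 + v) / 2}"
    using assms flux_picard_iter_tendsto by auto
  show "continuous_on {0<..<(1 + v) / 2} (\<lambda>x. pot x * U x)"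
    by (intro continuous_on_mult continuous_on_subset[OF continuous_on_pot]
        continuous_on_subset[OF admissibleD(1)[OF admissible_U, of "(1 + v) / 2"]]) (use assms in auto)
qed (use assms in auto)

lemma U_has_derivative:
  assumes "0 < v" "v < 1"
  shows "(U has_real_derivative flux U v / kappa v) (at v)"
proof -
  have "((\<lambda>u. integral {0..u} (\<lambda>t. flux U t / kappa t)) has_real_derivative flux U v / kappa v) (at v)"
  proof (rule has_real_derivative_integral_upper[where b = "(1 + v) / 2"])
    show "(\<lambda>t. flux U t / kappa t) integrable_on {0..(1 + v) / 2}"
      using assms picard_picard_iter_tendsto by auto
    show "continuous_on {0<..<(1 + v) / 2} (\<lambda>t. flux U t / kappa t)"
    proof (rule continuous_on_divide)
      show "continuous_on {0<..<(1 + v) / 2} (flux U)"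
        by (rule continuous_on_subset[OF continuous_on_flux[OF admissible_U, of "(1 + v) / 2"]])
          (use assms in auto)
      show "continuous_on {0<..<(1 + v) / 2} kappa"
        by (rule continuous_on_subset[OF continuous_on_kappa]) (use assms in auto)
    qed (use kappa_pos in \<open>auto simp: less_imp_neq[symmetric]\<close>)
  qed (use assms in auto)
  then have "(picard U has_real_derivative flux U v / kappa v) (at v)"
    unfolding picard_def[abs_def] by (auto intro!: derivative_eq_intros)
  then show ?thesis
    by (rule has_field_derivative_transform_within_open[where S = "{0<..<1}"])
      (use assms U_eq_picard in auto)
qed

lemma flux_U_pos:
  assumes "0 < t" "t < 1"
  shows "0 < flux U t"
proof -
  have "flux U 0 < flux U t"
  proof (rule DERIV_pos_imp_increasing_open[OF assms(1)])
    show "\<exists>y. (flux U has_real_derivative y) (at x) \<and> 0 < y" if "0 < x" "x < t" for x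
      using flux_U_has_derivative[of x] pot_pos[of x] admissibleD(2)[OF admissible_U, of x] that assms
      by (intro exI[of _ "pot x * U x"]) auto
    show "continuous_on {0..t} (flux U)"
      by (rule continuous_on_flux[OF admissible_U]) (use assms in auto)
  qed
  then show ?thesis by (simp add: flux_def)
qed

definition w :: "real \<Rightarrow> real" where
  "w s = flux U (\<phi> s) / U (\<phi> s)"

lemma w_has_derivative:
  assumes s: "s \<in> I\<^sub>\<xi>"
  shows "(w has_real_derivative w s ^ 2 - q * r s ^ 2) (at s)"
proof -
  define v where "v = \<phi> s"
  have v: "0 < v" "v < 1" using phi_in_Ioo[OF s] unfolding v_def by auto
  have U_ge_1: "1 \<le> U v" using admissibleD(2)[OF admissible_U] v by auto
  have "((\<lambda>x. flux U (\<phi> x)) has_real_derivative pot v * U v * - kappa v) (at s)"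
    using DERIV_chain2[OF flux_U_has_derivative[OF v, unfolded v_def] has_real_derivative_phi[OF s]]
    unfolding v_def .
  moreover have "((\<lambda>x. U (\<phi> x)) has_real_derivative flux U v / kappa v * - kappa v) (at s)"
    using DERIV_chain2[OF U_has_derivative[OF v, unfolded v_def] has_real_derivative_phi[OF s]]
    unfolding v_def .
  ultimately have "(w has_real_derivative
      (pot v * U v * - kappa v * U v - flux U v * (flux U v / kappa v * - kappa v)) / (U v * U v)) (at s)"
    unfolding w_def[abs_def] using DERIV_divide U_ge_1 unfolding v_def by fastforce
  moreover have "(pot v * U v * - kappa v * U v - flux U v * (flux U v / kappa v * - kappa v)) / (U v * U v)
      = w s ^ 2 - q * r s ^ 2"
  proof -
    have r_sq: "r s ^ 2 = kappa v ^ 2 / (c * v * (1 - v))"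
      unfolding rfun_eq[OF s] v_def[symmetric] using v c_pos by (simp add: power_divide)
    show ?thesis
      unfolding r_sq w_def v_def[symmetric] pot_def using v c_pos kappa_pos[of v] U_ge_1
      by (simp add: field_simps power2_eq_square)
  qed
  ultimately show ?thesis by simp
qed

lemma riccati_sol_w: "riccati_sol p \<rho> d c q w"
  unfolding riccati_sol_def using w_has_derivative by blast

lemma w_pos: "s \<in> I\<^sub>\<xi> \<Longrightarrow> 0 < w s"
  unfolding w_def using phi_in_Ioo flux_U_pos admissibleD(2)[OF admissible_U]
  by (meson divide_pos_pos less_le_trans less_imp_le zero_less_one)

lemma w_le_pot_int:
  assumes "s \<in> I\<^sub>\<xi>"
  shows "w s \<le> pot_int (\<phi> s)"
proof -
  have v: "0 < \<phi> s" "\<phi> s < 1" using phi_in_Ioo[OF assms] by auto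
  then have "flux U (\<phi> s) \<le> pot_int (\<phi> s) * U (\<phi> s)" "1 \<le> U (\<phi> s)"
    using flux_le_pot_int[OF admissible_U] admissibleD(2)[OF admissible_U] by auto
  then show ?thesis unfolding w_def by (simp add: divide_le_eq)
qed

lemma tendsto_w_at_xi: "(w \<longlongrightarrow> 0) (at_xi p \<rho> d c)"
proof (rule tendstoI)
  fix e :: real assume "e > 0"
  have "((\<lambda>v. v powr \<alpha> * (pot_const * (1 / \<alpha> - ln (1 - v)))) \<longlongrightarrow> 0) (at_right 0)"
    using tendsto_powr_times_ln_bound[OF alpha_pos] .
  then have "eventually (\<lambda>v. v powr \<alpha> * ratio_bound v < e) (at_right 0)"
    unfolding ratio_bound_def using \<open>e > 0\<close> by (rule order_tendstoD(2))
  then obtain b where b: "b > 0" "\<And>v. 0 < v \<Longrightarrow> v < b \<Longrightarrow> v powr \<alpha> * ratio_bound v < e"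
    unfolding eventually_at_right_field by auto
  define v where "v = min (b / 2) (1 / 2)"
  have v: "0 < v" "v < 1" "v < b" using b unfolding v_def by auto
  show "eventually (\<lambda>s. dist (w s) 0 < e) (at_xi p \<rho> d c)"
    using eventually_at_xi[OF v(1,2)]
  proof (rule eventually_mono)
    fix s assume s: "s \<in> I\<^sub>\<xi> \<and> \<theta> v < s"
    then have phi_s: "0 < \<phi> s" "\<phi> s < v" using phi_in_Ioo phi_less_iff v by auto
    have "w s \<le> pot_int (\<phi> s)" using w_le_pot_int s by auto
    also have "\<dots> \<le> \<phi> s powr \<alpha> * ratio_bound (\<phi> s)" using pot_int_le phi_s v by auto
    also have "\<dots> < e" using b(2) phi_s v by auto
    finally have "w s < e" .
    moreover have "0 < w s" using w_pos s by auto
    ultimately show "dist (w s) 0 < e" by simp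
  qed
qed

lemma w_less_sqrt_q_rfun:
  assumes s: "s \<in> I\<^sub>\<xi>" and small: "ratio_bound (\<phi> s) * sqrt (c * \<phi> s * (1 - \<phi> s)) < sqrt q"
  shows "w s < sqrt q * r s"
proof -
  define v where "v = \<phi> s"
  have v: "0 < v" "v < 1" using phi_in_Ioo[OF s] unfolding v_def by auto
  have root_pos: "0 < sqrt (c * v * (1 - v))" using v c_pos by simp
  have "w s \<le> kappa v * ratio_bound v"
    using w_le_pot_int[OF s] pot_int_le_kappa[of v] v unfolding v_def by fastforce
  also have "\<dots> < kappa v * (sqrt q / sqrt (c * v * (1 - v)))"
    using small root_pos kappa_pos[of v] unfolding v_def[symmetric]
    by (intro mult_strict_left_mono) (auto simp: pos_less_divide_eq)
  also have "\<dots> = sqrt q * r s"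
    unfolding rfun_eq[OF s] v_def by simp
  finally show ?thesis .
qed

lemma w_less_sqrt_q_rfun_near_ends:
  obtains s1 s2 where "0 < s1" "s1 < s2" "ereal s2 < \<xi>"
    "\<And>s. s \<in> I\<^sub>\<xi> \<Longrightarrow> s < s1 \<or> s2 < s \<Longrightarrow> w s < sqrt q * r s"
proof -
  define f where "f v = ratio_bound v * sqrt (c * v * (1 - v))" for v
  have "(f \<longlongrightarrow> 0) (at_right 0)" "(f \<longlongrightarrow> 0) (at_left 1)"
    unfolding f_def ratio_bound_def using tendsto_ln_bound_times_sqrt[OF alpha_pos c_pos] by auto
  then have "eventually (\<lambda>v. f v < sqrt q) (at_right 0)" "eventually (\<lambda>v. f v < sqrt q) (at_left 1)"
    using q_pos by (auto intro: order_tendstoD(2))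
  then obtain b0 b1 where b0: "0 < b0" "\<And>v. 0 < v \<Longrightarrow> v < b0 \<Longrightarrow> f v < sqrt q"
    and b1: "b1 < 1" "\<And>v. b1 < v \<Longrightarrow> v < 1 \<Longrightarrow> f v < sqrt q"
    unfolding eventually_at_right_field eventually_at_left_field by auto
  define v1 where "v1 = max b1 (1 / 2)"
  define v2 where "v2 = min (b0 / 2) (1 / 4)"
  have v: "0 < v2" "v2 < v1" "v1 < 1" "v2 < b0" "b1 \<le> v1"
    using b0 b1 unfolding v1_def v2_def by auto
  show ?thesis
  proof (rule that[of "\<theta> v1" "\<theta> v2"])
    show "0 < \<theta> v1" "\<theta> v1 < \<theta> v2" "ereal (\<theta> v2) < \<xi>"
      using theta_pos theta_strict_antimono theta_less_xi v by auto
    fix s assume s: "s \<in> I\<^sub>\<xi>" and "s < \<theta> v1 \<or> \<theta> v2 < s"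
    then have "v1 < \<phi> s \<or> \<phi> s < v2"
      using less_phi_iff[OF s, of v1] phi_less_iff[OF s, of v2] v by auto
    then have "f (\<phi> s) < sqrt q"
      using b0(2) b1(2) phi_in_Ioo[OF s] v by force
    then show "w s < sqrt q * r s"
      unfolding f_def by (rule w_less_sqrt_q_rfun[OF s])
  qed
qed

lemma nonneg_riccati_sol_eq_w:
  assumes "riccati_sol p \<rho> d c q w'" "\<forall>s\<in>I\<^sub>\<xi>. 0 \<le> w' s" "(w' \<longlongrightarrow> 0) (at_xi p \<rho> d c)"
    and "s \<in> I\<^sub>\<xi>"
  shows "w' s = w s"
proof (rule riccati_nonneg_solutions_unique[OF is_interval_Ixi assms(4)])
  show "(w' has_real_derivative w' x ^ 2 - q * r x ^ 2) (at x)" if "x \<in> I\<^sub>\<xi>" for x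
    using assms(1) that unfolding riccati_sol_def by blast
  show "eventually (\<lambda>t. t \<in> I\<^sub>\<xi> \<and> s \<le> t) (at_xi p \<rho> d c)"
    using eventually_at_xi[of "\<phi> s"] phi_in_Ioo[OF assms(4)] theta_phi[OF assms(4)]
    by (auto elim: eventually_mono)
qed (use assms(2,3) w_has_derivative w_pos[THEN less_imp_le] tendsto_w_at_xi at_xi_neq_bot in auto)

lemma w_strict_antimono:
  assumes "x < y" "x \<in> I\<^sub>\<xi>" "y \<in> I\<^sub>\<xi>" "\<And>z. x \<le> z \<Longrightarrow> z \<le> y \<Longrightarrow> w z < sqrt q * r z"
  shows "w y < w x"
proof (rule DERIV_neg_imp_decreasing[OF assms(1)])
  fix z assume "x \<le> z" "z \<le> y"
  then have z: "z \<in> I\<^sub>\<xi>" "w z < sqrt q * r z"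
    using assms(4) mem_is_interval_1_I[OF is_interval_Ixi assms(2,3)] by auto
  have "w z ^ 2 < (sqrt q * r z) ^ 2"
    using w_pos[OF z(1)] z(2) by (intro power_strict_mono) auto
  also have "\<dots> = q * r z ^ 2" using q_pos by (simp add: power_mult_distrib)
  finally show "\<exists>D. (w has_real_derivative D) (at z) \<and> D < 0"
    using w_has_derivative[OF z(1)] by (intro exI conjI) auto
qed

lemma w_has_integral:
  assumes "a \<in> I\<^sub>\<xi>" "b \<in> I\<^sub>\<xi>" "a \<le> b"
  shows "(w has_integral ln (U (\<phi> a)) - ln (U (\<phi> b))) {a..b}"
proof -
  have "((\<lambda>s. - ln (U (\<phi> s))) has_real_derivative w s) (at s)" if s: "s \<in> I\<^sub>\<xi>" for s
  proof -
    define v where "v = \<phi> s"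
    have v: "0 < v" "v < 1" using phi_in_Ioo[OF s] unfolding v_def by auto
    have U_ge_1: "1 \<le> U v" using admissibleD(2)[OF admissible_U] v by auto
    have "((\<lambda>x. U (\<phi> x)) has_real_derivative flux U v / kappa v * - kappa v) (at s)"
      using DERIV_chain2[OF U_has_derivative[OF v, unfolded v_def] has_real_derivative_phi[OF s]]
      unfolding v_def .
    then have "((\<lambda>x. U (\<phi> x)) has_real_derivative - flux U (\<phi> s)) (at s)"
      using kappa_pos[of v] unfolding v_def by simp
    then show ?thesis
      unfolding w_def using U_ge_1 unfolding v_def
      by (auto intro!: derivative_eq_intros simp: field_simps)
  qed
  then have "(w has_integral - ln (U (\<phi> b)) - - ln (U (\<phi> a))) {a..b}"
    using assms mem_is_interval_1_I[OF is_interval_Ixi assms(1,2)]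
    by (intro fundamental_theorem_of_calculus)
      (auto simp: has_real_derivative_iff_has_vector_derivative[symmetric] has_field_derivative_at_within)
  then show ?thesis by simp
qed

lemma ln_U_phi_bounds:
  assumes "s \<in> I\<^sub>\<xi>"
  shows "0 \<le> ln (U (\<phi> s))" "ln (U (\<phi> s)) \<le> pot_const * (1 / \<alpha> + 1)"
proof -
  have "1 \<le> U (\<phi> s)" "U (\<phi> s) \<le> exp (pot_const * (1 / \<alpha> + 1))"
    using phi_in_Ioo[OF assms] admissibleD(2,3)[OF admissible_U, of "\<phi> s"]
      growth_bound_le[of "\<phi> s"] by auto
  moreover from this have "ln (U (\<phi> s)) \<le> ln (exp (pot_const * (1 / \<alpha> + 1)))"
    by (subst ln_le_cancel_iff) auto
  ultimately show "0 \<le> ln (U (\<phi> s))" "ln (U (\<phi> s)) \<le> pot_const * (1 / \<alpha> + 1)"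
    by simp_all
qed

lemma w_integrable: "w integrable_on I\<^sub>\<xi>"
proof -
  define a where "a n = 1 / real (n + 2)" for n
  have a: "0 < a n" "a n \<le> 1 / 2" "a (Suc n) < a n" for n
    unfolding a_def by (auto simp: field_simps)
  define K where "K n = {\<theta> (1 - a n)..\<theta> (a n)}" for n
  have K_ends: "\<theta> (1 - a n) \<in> I\<^sub>\<xi>" "\<theta> (a n) \<in> I\<^sub>\<xi>" "\<theta> (1 - a n) \<le> \<theta> (a n)" for n
    using a[of n] theta_in_Ixi theta_antimono[of "a n" "1 - a n"] by auto
  show ?thesis
  proof (rule nonneg_integrable_on_exhaustion[where K = K])
    show "K n \<subseteq> K (Suc n)" for n
      unfolding K_def using a[of n] a[of "Suc n"] theta_antimono[of "1 - a n" "1 - a (Suc n)"]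
        theta_antimono[of "a (Suc n)" "a n"] by auto
    show "K n \<subseteq> I\<^sub>\<xi>" for n
      unfolding K_def using mem_is_interval_1_I[OF is_interval_Ixi K_ends(1,2)] by auto
    show "\<exists>n. x \<in> K n" if "x \<in> I\<^sub>\<xi>" for x
      using theta_intervals_exhaust_Ixi[OF that] unfolding K_def a_def by (metis atLeastAtMost_iff)
    show "w integrable_on K n" for n
      unfolding K_def using w_has_integral[OF K_ends] by blast
    show "0 \<le> w x" if "x \<in> I\<^sub>\<xi>" for x
      using w_pos[OF that] by simp
    show "integral (K n) w \<le> pot_const * (1 / \<alpha> + 1)" for n
      using integral_unique[OF w_has_integral[OF K_ends[of n]]]
        ln_U_phi_bounds[OF K_ends(1)[of n]] ln_U_phi_bounds[OF K_ends(2)[of n]]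
      unfolding K_def by linarith
  qed
qed

end

theorem lemma2p1:
  fixes p :: "nat \<Rightarrow> real" and \<rho> d c :: real
  assumes rho_pos: "\<rho> > 0" and d_pos: "d > 0" and c_pos: "c > 0"
    and p_nonneg: "\<And>k. k \<ge> 1 \<Longrightarrow> p k \<ge> 0"
    and p_sum: "(\<lambda>k. p (Suc k)) sums \<rho>"
    and condL: "summable (\<lambda>i. p (Suc i) * ln (real (Suc i)))"
  shows "\<forall>q>0. \<exists>w.
     riccati_sol p \<rho> d c q w
   \<and> (\<forall>s\<in>Ixi p \<rho> d c. w s \<ge> 0)
   \<and> (w \<longlongrightarrow> 0) (at_xi p \<rho> d c)
   \<and> (\<forall>w'. riccati_sol p \<rho> d c q w' \<and> (\<forall>s\<in>Ixi p \<rho> d c. w' s \<ge> 0)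
           \<and> (w' \<longlongrightarrow> 0) (at_xi p \<rho> d c)
           \<longrightarrow> (\<forall>s\<in>Ixi p \<rho> d c. w' s = w s))
   \<and> (\<forall>s\<in>Ixi p \<rho> d c. w s > 0)
   \<and> (\<exists>s1 s2. 0 < s1 \<and> s1 < s2 \<and> ereal s2 < xi p \<rho> d c \<and>
        (\<forall>s\<in>Ixi p \<rho> d c. (s < s1 \<or> s2 < s) \<longrightarrow> w s < sqrt q * rfun p \<rho> d c s))
   \<and> w integrable_on Ixi p \<rho> d c
   \<and> (\<exists>e>0. \<forall>x y. 0 < x \<and> x < y \<and> y < e \<longrightarrow> w y < w x)
   \<and> (\<exists>a. ereal a < xi p \<rho> d c \<and>
        (\<forall>x y. a < x \<and> x < y \<and> ereal y < xi p \<rho> d c \<longrightarrow> w y < w x))"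
  apply (intro allI impI)
  subgoal premises q_pos for q
  proof -
    interpret riccati_eq p \<rho> d c q
      using assms q_pos by unfold_locales auto
    obtain s1 s2 where s: "0 < s1" "s1 < s2" "ereal s2 < \<xi>"
      and below: "\<And>s. s \<in> I\<^sub>\<xi> \<Longrightarrow> s < s1 \<or> s2 < s \<Longrightarrow> w s < sqrt q * r s"
      using w_less_sqrt_q_rfun_near_ends by blast
    have in_Ixi: "x \<in> I\<^sub>\<xi>" if "0 < x" "x \<le> y" "ereal y < \<xi>" for x y
      using that order.strict_trans1[of "ereal x" "ereal y" \<xi>] unfolding Ixi_def by auto
    have "w y < w x" if "0 < x" "x < y" "y < s1" for x y
      using that s in_Ixi[of _ s2] below by (intro w_strict_antimono) auto
    moreover have "w y < w x" if "s2 < x" "x < y" "ereal y < \<xi>" for x y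
      using that s in_Ixi[of _ y] below by (intro w_strict_antimono) auto
    ultimately show ?thesis
      using riccati_sol_w w_pos tendsto_w_at_xi nonneg_riccati_sol_eq_w w_integrable s below
      by (intro exI[of _ w]) (blast intro: less_imp_le)
  qed
  done

end
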